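(* Let $\varphi\colon\partial\mathbb{D}\to\partial\mathbb{D}$ be a bi-Lipschitz homeomorphism fixing $1,i,-1,-i$, written $\varphi(e^{i\theta})=e^{i\varphi(\theta)}$, where $\theta\mapsto\varphi(\theta)$ is the increasing continuous lift with $\varphi(0)=0$. For $t\in[0,1]$ let $\varphi_t(\theta)=(1-t)\theta+t\varphi(\theta)$ and define $\overline{\varphi}\colon\overline{\mathbb{D}}\times[0,1]\to\overline{\mathbb{D}}\times[0,1]$ by $\overline{\varphi}(re^{i\theta},t)=(re^{i\varphi_t(\theta)},t)$. Then $\overline{\varphi}$ is bi-Lipschitz.
   Context: $\mathbb{D}=\{z\in\mathbb{C}:|z|<1\}$ is the unit disk. *)

theory Defs
  imports "HOL-Analysis.Analysis"
begin

definition bi_lipschitz_on :: "'a::metric_space set \<Rightarrow> ('a \<Rightarrow> 'b::metric_space) \<Rightarrow> bool" where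
  "bi_lipschitz_on S f \<longleftrightarrow>
     (\<exists>C. lipschitz_on C S f \<and> (\<forall>x\<in>S. \<forall>y\<in>S. dist x y \<le> C * dist (f x) (f y)))"

definition lift_interp :: "(real \<Rightarrow> real) \<Rightarrow> real \<Rightarrow> real \<Rightarrow> real" where
  "lift_interp L t \<theta> = (1 - t) * \<theta> + t * L \<theta>"

text \<open>The angle is taken as Arg z; the value is independent of the choice of angle since
  the lift satisfies L(theta + 2 pi) = L theta + 2 pi, and irrelevant at z = 0.\<close>
definition phibar :: "(real \<Rightarrow> real) \<Rightarrow> complex \<times> real \<Rightarrow> complex \<times> real" where
  "phibar L p = (rcis (cmod (fst p)) (lift_interp L (snd p) (Arg (fst p))), snd p)"

end

theory Submission
  imports Defs
begin

text \<open>Chord and arc are comparable on arcs of length at most \<pi>, so the lift \<open>L\<close> of a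
  bi-Lipschitz circle map satisfies \<open>L (\<theta> + 2\<pi>) = L \<theta> + 2\<pi>\<close> and has increments over such arcs
  bounded above and below by positive multiples of their length. These bounds survive the
  convex interpolation \<open>\<phi>\<^sub>t = (1 - t) id + t L\<close>, so the circle maps induced by the \<open>\<phi>\<^sub>t\<close>, and by the
  law of cosines their radial extensions to the disk, are bi-Lipschitz uniformly in \<open>t\<close>.
  Moreover \<open>|\<phi>\<^sub>t \<theta> - \<phi>\<^sub>s \<theta>| = |L \<theta> - \<theta>| |t - s|\<close>, and a map \<open>(z, t) \<mapsto> (G\<^sub>t z, t)\<close> whose fibre
  maps are uniformly bi-Lipschitz and Lipschitz in \<open>t\<close> is bi-Lipschitz.\<close>

lemma sin_ge_third:
  fixes x :: real assumes "0 \<le> x" "x \<le> pi/2" shows "x/3 \<le> sin x"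
proof (cases "x \<le> pi/3")
  case True
  let ?f = "\<lambda>x. sin x - x/3"
  have "?f 0 \<le> ?f x"
  proof (rule DERIV_nonneg_imp_nondecreasing[OF assms(1)])
    fix u assume u: "0 \<le> u" "u \<le> x"
    have "cos (pi/3) \<le> cos u" using u True by (intro cos_monotone_0_pi_le) auto
    hence "0 \<le> cos u - 1/3" by (simp add: cos_60)
    moreover have "(?f has_real_derivative cos u - 1/3) (at u)"
      by (auto intro!: derivative_eq_intros)
    ultimately show "\<exists>y. (?f has_real_derivative y) (at u) \<and> 0 \<le> y" by blast
  qed
  thus ?thesis by simp
next
  case False
  have "sin (pi/3) \<le> sin x" using False assms by (intro sin_monotone_2pi_le) auto
  moreover have "4/3 \<le> sqrt 3" by (rule real_le_rsqrt) (simp add: power2_eq_square)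
  moreover have "x \<le> 2" using assms pi_less_4 by linarith
  ultimately show ?thesis by (simp add: sin_60)
qed

lemma norm_cis_diff: "cmod (cis x - cis y) = 2 * \<bar>sin ((x - y) / 2)\<bar>"
proof -
  define u where "u = (x - y) / 2"
  have "2*u = x - y" by (simp add: u_def)
  hence "cis x - cis y = cis y * (cis (2*u) - 1)"
    by (simp add: algebra_simps cis_mult)
  hence "(cmod (cis x - cis y))\<^sup>2 = (cos (2*u) - 1)\<^sup>2 + (sin (2*u))\<^sup>2"
    by (simp add: norm_mult cmod_power2)
  also have "\<dots> = 2 - 2 * cos (2*u)"
    using sin_cos_squared_add[of "2*u"] by (simp add: power2_eq_square algebra_simps)
  also have "\<dots> = (2 * \<bar>sin u\<bar>)\<^sup>2"
    by (simp add: cos_double_sin power_mult_distrib)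
  finally show ?thesis
    using power2_eq_iff_nonneg[of "cmod (cis x - cis y)" "2 * \<bar>sin u\<bar>"] by (simp add: u_def)
qed

lemma norm_cis_diff_le: "cmod (cis x - cis y) \<le> \<bar>x - y\<bar>"
  using abs_sin_x_le_abs_x[of "(x - y)/2"] by (simp add: norm_cis_diff)

lemma norm_cis_diff_ge:
  assumes "\<bar>x - y\<bar> \<le> pi" shows "\<bar>x - y\<bar> / 3 \<le> cmod (cis x - cis y)"
proof -
  define a where "a = (x - y) / 2"
  have "cmod (cis x - cis y) = 2 * \<bar>sin a\<bar>" by (simp add: norm_cis_diff a_def)
  moreover have "\<bar>sin \<bar>a\<bar>\<bar> = \<bar>sin a\<bar>" by (cases "0 \<le> a") (simp_all add: abs_of_neg)
  moreover have "0 \<le> sin \<bar>a\<bar>" using assms by (intro sin_ge_zero) (auto simp: a_def)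
  moreover have "\<bar>a\<bar> / 3 \<le> sin \<bar>a\<bar>" using assms by (intro sin_ge_third) (auto simp: a_def)
  ultimately show ?thesis by (simp add: a_def)
qed

lemma norm_cis_diff_ge_min:
  assumes "0 \<le> x - y" "x - y \<le> 2*pi"
  shows "min (x - y) (2*pi - (x - y)) / 3 \<le> cmod (cis x - cis y)"
proof (cases "x - y \<le> pi")
  case True
  have "min (x - y) (2*pi - (x - y)) / 3 \<le> \<bar>x - y\<bar> / 3"
    by (intro divide_right_mono) auto
  thus ?thesis using norm_cis_diff_ge[of x y] assms True by linarith
next
  case False
  have "cmod (cis x - cis y) = cmod (cis (y + 2*pi) - cis x)"
    by (simp add: norm_minus_commute flip: cis_mult)
  moreover have "(2*pi - (x - y)) / 3 \<le> cmod (cis (y + 2*pi) - cis x)"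
    using norm_cis_diff_ge[of "y + 2*pi" x] assms False by simp
  moreover have "min (x - y) (2*pi - (x - y)) / 3 \<le> (2*pi - (x - y)) / 3"
    by (intro divide_right_mono) auto
  ultimately show ?thesis by linarith
qed

lemma cis_neq_cis:
  assumes "0 < x - y" "x - y < 2*pi" shows "cis x \<noteq> cis y"
  using norm_cis_diff_ge_min[of x y] assms by auto

lemma norm_rcis_diff_sq:
  "(cmod (rcis r x - rcis \<rho> y))\<^sup>2 = (r - \<rho>)\<^sup>2 + r * \<rho> * (cmod (cis x - cis y))\<^sup>2"
proof -
  have "(sin x)\<^sup>2 + (cos x)\<^sup>2 = 1" "(sin y)\<^sup>2 + (cos y)\<^sup>2 = 1" by simp_all
  hence "(r * cos x - \<rho> * cos y)\<^sup>2 + (r * sin x - \<rho> * sin y)\<^sup>2 =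
      (r - \<rho>)\<^sup>2 + r * \<rho> * ((cos x - cos y)\<^sup>2 + (sin x - sin y)\<^sup>2)" by algebra
  thus ?thesis by (simp add: cmod_power2 rcis_def)
qed

lemma norm_rcis_diff_le:
  assumes "0 \<le> r" "0 \<le> \<rho>" "1 \<le> K"
    and angle: "cmod (cis x' - cis y') \<le> K * cmod (cis x - cis y)"
  shows "cmod (rcis r x' - rcis \<rho> y') \<le> K * cmod (rcis r x - rcis \<rho> y)"
proof (rule power2_le_imp_le)
  have "(cmod (cis x' - cis y'))\<^sup>2 \<le> K\<^sup>2 * (cmod (cis x - cis y))\<^sup>2"
    using angle by (metis norm_ge_zero power_mono power_mult_distrib)
  hence "r * \<rho> * (cmod (cis x' - cis y'))\<^sup>2 \<le> K\<^sup>2 * (r * \<rho> * (cmod (cis x - cis y))\<^sup>2)"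
    using assms(1,2) by (metis mult.left_commute mult_left_mono zero_le_mult_iff)
  moreover have "(r - \<rho>)\<^sup>2 \<le> K\<^sup>2 * (r - \<rho>)\<^sup>2"
    using assms(3) by (simp add: mult_le_cancel_right1 one_le_power)
  ultimately show "(cmod (rcis r x' - rcis \<rho> y'))\<^sup>2 \<le> (K * cmod (rcis r x - rcis \<rho> y))\<^sup>2"
    by (simp add: norm_rcis_diff_sq power_mult_distrib distrib_left)
  show "0 \<le> K * cmod (rcis r x - rcis \<rho> y)" using assms by simp
qed

lemma dist_Pair_le_add: "dist (a, b) (c, d) \<le> dist a c + dist b d"
  unfolding dist_Pair_Pair by (rule sqrt_sum_squares_le_sum) simp_all

lemma bi_lipschitz_on_fibrewise:
  fixes G :: "'b::metric_space \<Rightarrow> 'a::metric_space \<Rightarrow> 'c::metric_space"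
  assumes "1 \<le> K" "0 \<le> M"
    and fibre: "\<And>t z w. t \<in> T \<Longrightarrow> z \<in> S \<Longrightarrow> w \<in> S \<Longrightarrow>
      dist (G t z) (G t w) \<le> K * dist z w \<and> dist z w \<le> K * dist (G t z) (G t w)"
    and time: "\<And>t s w. t \<in> T \<Longrightarrow> s \<in> T \<Longrightarrow> w \<in> S \<Longrightarrow> dist (G t w) (G s w) \<le> M * dist t s"
  shows "bi_lipschitz_on (S \<times> T) (\<lambda>(z, t). (G t z, t))"
proof -
  let ?F = "\<lambda>(z, t). (G t z, t)" and ?C = "K + K * M + M + 1"
  have "dist (?F p) (?F q) \<le> ?C * dist p q \<and> dist p q \<le> ?C * dist (?F p) (?F q)"
    if pq_in: "p \<in> S \<times> T" "q \<in> S \<times> T" for p q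
  proof -
    obtain z t w s where pq: "p = (z, t)" "q = (w, s)"
      and in_ST: "z \<in> S" "w \<in> S" "t \<in> T" "s \<in> T"
      using pq_in by (cases p, cases q) auto
    define Z T' X Y where "Z = dist z w" and "T' = dist t s"
      and "X = dist (G t z) (G s w)" and "Y = dist (G t z) (G t w)"
    have "X \<le> Y + dist (G t w) (G s w)" "Y \<le> X + dist (G t w) (G s w)"
      unfolding X_def Y_def by (simp_all add: dist_triangle dist_triangle2)
    hence XY: "X \<le> Y + M * T'" "Y \<le> X + M * T'"
      using time[OF in_ST(3,4,2)] by (simp_all add: T'_def)
    have YZ: "Y \<le> K * Z" "Z \<le> K * Y" using fibre[OF in_ST(3,1,2)] by (simp_all add: Y_def Z_def)
    have D: "Z \<le> dist p q" "T' \<le> dist p q" "dist p q \<le> Z + T'"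
      using dist_fst_le[of p q] dist_snd_le[of p q] dist_Pair_le_add[of z t w s]
      by (simp_all add: pq Z_def T'_def)
    define E where "E = dist (G t z, t) (G s w, s)"
    have E: "X \<le> E" "T' \<le> E" "E \<le> X + T'"
      using dist_fst_le[of "(G t z, t)" "(G s w, s)"] dist_snd_le[of "(G t z, t)" "(G s w, s)"]
        dist_Pair_le_add[of "G t z" t "G s w" s]
      by (simp_all add: E_def X_def T'_def)
    have "K * Z \<le> K * dist p q" "M * T' \<le> M * dist p q" "0 \<le> K * M * dist p q"
      using D assms(1,2) by (simp_all add: mult_left_mono)
    hence "E \<le> ?C * dist p q" using E(3) XY(1) YZ(1) D(2) by (simp add: algebra_simps)
    moreover have "K * Y \<le> K * (X + M * T')" "K * X \<le> K * E"
      "K * M * T' \<le> K * M * E" "0 \<le> M * E"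
      using XY(2) E assms(1,2) by (simp_all add: mult_left_mono)
    hence "dist p q \<le> ?C * E" using D(3) YZ(2) E(2) by (simp add: algebra_simps)
    ultimately show ?thesis by (simp add: pq E_def)
  qed
  thus ?thesis unfolding bi_lipschitz_on_def lipschitz_on_def using assms(1,2)
    by (intro exI[of _ ?C]) auto
qed

text \<open>Increments are only controlled over arcs of length at most \<pi>, where chord and arc length
  are comparable.\<close>
definition bi_lipschitz_lift :: "real \<Rightarrow> real \<Rightarrow> (real \<Rightarrow> real) \<Rightarrow> bool" where
  "bi_lipschitz_lift m M F \<longleftrightarrow> (\<forall>\<theta>. F (\<theta> + 2*pi) = F \<theta> + 2*pi) \<and>
     (\<forall>a b. b \<le> a \<longrightarrow> a \<le> b + pi \<longrightarrow> m * (a - b) \<le> F a - F b \<and> F a - F b \<le> M * (a - b))"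

lemma lift_increment_gap:
  assumes per: "\<And>\<theta>. F (\<theta> + 2*pi) = F \<theta> + 2*pi"
    and lower: "\<And>a b. b \<le> a \<Longrightarrow> a \<le> b + pi \<Longrightarrow> m * (a - b) \<le> F a - F b"
    and "b \<le> a" "a \<le> b + pi"
  shows "m * (2*pi - (a - b)) \<le> 2*pi - (F a - F b)"
proof -
  have "m * (b + pi - a) \<le> F (b + 2*pi) - F (a + pi)"
    using lower[of "a + pi" "b + 2*pi"] assms(3,4) by (simp add: algebra_simps)
  moreover have "m * pi \<le> F (a + pi) - F a" using lower[of a "a + pi"] by simp
  ultimately show ?thesis using per[of b] by (simp add: algebra_simps)
qed

lemma lift_increment_upper:
  assumes per: "\<And>\<theta>. F (\<theta> + 2*pi) = F \<theta> + 2*pi"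
    and lower: "\<And>a b. b \<le> a \<Longrightarrow> a \<le> b + pi \<Longrightarrow> m * (a - b) \<le> F a - F b"
    and upper: "\<And>a b. cmod (cis (F a) - cis (F b)) \<le> C * cmod (cis a - cis b)"
    and "0 < m" "0 \<le> C" and ab: "b \<le> a" "a \<le> b + pi"
  shows "F a - F b \<le> max (3 * C) (6 * C / m) * (a - b)"
proof -
  define e D where "e = a - b" and "D = F a - F b"
  have e: "0 \<le> e" "e \<le> pi" using ab by (simp_all add: e_def)
  have "m * pi \<le> m * (2*pi - e)" using e \<open>0 < m\<close> by (intro mult_left_mono) auto
  hence D: "m * e \<le> D" "m * pi \<le> 2*pi - D"
    using lower[OF ab] lift_increment_gap[OF per lower ab] by (simp_all add: e_def D_def)
  have "0 \<le> m * e" "0 \<le> m * pi" using e \<open>0 < m\<close> by simp_all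
  hence D_bounds: "0 \<le> D" "D \<le> 2*pi" using D by linarith+
  have "min D (2*pi - D) / 3 \<le> cmod (cis (F a) - cis (F b))"
    using norm_cis_diff_ge_min[of "F a" "F b"] D_bounds by (simp add: D_def)
  also have "\<dots> \<le> C * cmod (cis a - cis b)" by (rule upper)
  also have "\<dots> \<le> C * e"
    using norm_cis_diff_le[of a b] e \<open>0 \<le> C\<close> by (intro mult_left_mono) (auto simp: e_def)
  finally have chord: "min D (2*pi - D) \<le> 3 * C * e" by simp
  have max_ge: "3 * C * e \<le> max (3 * C) (6 * C / m) * e"
    "6 * C / m * e \<le> max (3 * C) (6 * C / m) * e"
    using e by (simp_all only: mult_right_mono max.cobounded1 max.cobounded2)
  show ?thesis
  proof (cases "D \<le> m * pi")
    case True
    hence "D \<le> 3 * C * e" using chord D by simp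
    thus ?thesis using max_ge by (simp add: D_def e_def)
  next
    case False
    hence "m * pi \<le> 3 * C * e" using chord D by simp
    hence "2 * pi \<le> 6 * C / m * e" using \<open>0 < m\<close> by (simp add: field_simps)
    thus ?thesis using D_bounds max_ge by (simp add: D_def e_def)
  qed
qed

text \<open>\<open>L (\<theta> + 2\<pi>) - L \<theta>\<close> is a positive multiple of \<open>2\<pi>\<close>; a larger multiple would, by the
  intermediate value theorem, give a second preimage of \<open>cis (L \<theta>)\<close> in \<open>(\<theta>, \<theta> + 2\<pi>)\<close>.\<close>
lemma strict_mono_lift_periodic:
  fixes L :: "real \<Rightarrow> real"
  assumes cont: "continuous_on UNIV L" and mono: "strict_mono L"
    and lift: "\<And>a b. cis (L a) = cis (L b) \<longleftrightarrow> cis a = cis b"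
  shows "L (\<theta> + 2*pi) = L \<theta> + 2*pi"
proof -
  have cis_period: "cis (x + 2*pi) = cis x" for x by (simp flip: cis_mult)
  have "L \<theta> < L (\<theta> + 2*pi)" using mono by (simp add: strict_mono_less)
  moreover have "\<not> L (\<theta> + 2*pi) < L \<theta> + 2*pi"
    using cis_neq_cis[of "L (\<theta> + 2*pi)" "L \<theta>"] lift[of "\<theta> + 2*pi" \<theta>] cis_period calculation
    by auto
  moreover have "\<not> L \<theta> + 2*pi < L (\<theta> + 2*pi)"
  proof
    assume "L \<theta> + 2*pi < L (\<theta> + 2*pi)"
    then obtain x where x: "\<theta> \<le> x" "x \<le> \<theta> + 2*pi" "L x = L \<theta> + 2*pi"
      using IVT'[of L \<theta> "L \<theta> + 2*pi" "\<theta> + 2*pi"] continuous_on_subset[OF cont] by auto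
    hence "L \<theta> < L x" "L x < L (\<theta> + 2*pi)" using \<open>L \<theta> + 2*pi < _\<close> by auto
    hence "\<theta> < x" "x < \<theta> + 2*pi" using mono by (simp_all add: strict_mono_less)
    moreover have "cis x = cis \<theta>" using lift[of x \<theta>] x(3) cis_period by simp
    ultimately show False using cis_neq_cis[of x \<theta>] by simp
  qed
  ultimately show ?thesis by linarith
qed

lemma bi_lipschitz_lift_of_circle_map:
  fixes L :: "real \<Rightarrow> real"
  assumes cont: "continuous_on UNIV L" and mono: "strict_mono L"
    and upper: "\<And>a b. cmod (cis (L a) - cis (L b)) \<le> C * cmod (cis a - cis b)"
    and lower: "\<And>a b. cmod (cis a - cis b) \<le> C * cmod (cis (L a) - cis (L b))"
  shows "\<exists>m M. 0 < m \<and> bi_lipschitz_lift m M L"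
proof -
  have "0 < C"
  proof (rule ccontr)
    assume "\<not> 0 < C"
    hence "C * cmod (cis (L 0) - cis (L pi)) \<le> 0" by (simp add: mult_nonpos_nonneg)
    thus False using lower[of 0 pi] by simp
  qed
  have per: "L (\<theta> + 2*pi) = L \<theta> + 2*pi" for \<theta>
  proof (rule strict_mono_lift_periodic[OF cont mono])
    show "cis (L a) = cis (L b) \<longleftrightarrow> cis a = cis b" for a b
      using upper[of a b] lower[of a b] \<open>0 < C\<close> by (auto simp: mult_le_0_iff)
  qed
  define m where "m = 1 / (3 * C)"
  have "0 < m" using \<open>0 < C\<close> by (simp add: m_def)
  have L_lower: "m * (a - b) \<le> L a - L b" if ab: "b \<le> a" "a \<le> b + pi" for a b
  proof -
    have "(a - b) / 3 \<le> cmod (cis a - cis b)" using norm_cis_diff_ge[of a b] ab by simp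
    also have "\<dots> \<le> C * cmod (cis (L a) - cis (L b))" by (rule lower)
    also have "\<dots> \<le> C * (L a - L b)"
      using norm_cis_diff_le[of "L a" "L b"] strict_mono_less_eq[OF mono, of b a] ab \<open>0 < C\<close>
      by (intro mult_left_mono) auto
    finally show ?thesis using \<open>0 < C\<close> by (simp add: m_def field_simps)
  qed
  have "bi_lipschitz_lift m (max (3 * C) (6 * C / m)) L"
    unfolding bi_lipschitz_lift_def
    using per L_lower lift_increment_upper[OF per L_lower upper \<open>0 < m\<close>] \<open>0 < C\<close> by simp
  thus ?thesis using \<open>0 < m\<close> by blast
qed

lemma bi_lipschitz_lift_interp:
  assumes L: "bi_lipschitz_lift m M L" and t: "0 \<le> t" "t \<le> 1"
  shows "bi_lipschitz_lift (min 1 m) (max 1 M) (lift_interp L t)"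
  unfolding bi_lipschitz_lift_def
proof (intro conjI allI impI)
  show "lift_interp L t (\<theta> + 2*pi) = lift_interp L t \<theta> + 2*pi" for \<theta>
    using L by (simp add: bi_lipschitz_lift_def lift_interp_def algebra_simps)
  fix a b assume ab: "b \<le> a" "a \<le> b + pi"
  have incr: "lift_interp L t a - lift_interp L t b = (1 - t) * (a - b) + t * (L a - L b)"
    by (simp add: lift_interp_def algebra_simps)
  have L_ab: "m * (a - b) \<le> L a - L b" "L a - L b \<le> M * (a - b)"
    using L ab by (simp_all add: bi_lipschitz_lift_def)
  have "min 1 m * (a - b) \<le> a - b" "min 1 m * (a - b) \<le> L a - L b"
    using ab L_ab(1) mult_right_mono[of "min 1 m" 1 "a - b"] mult_right_mono[of "min 1 m" m "a - b"]
    by simp_all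
  hence "(1 - t) * (min 1 m * (a - b)) + t * (min 1 m * (a - b)) \<le> (1 - t) * (a - b) + t * (L a - L b)"
    using t by (intro add_mono mult_left_mono) simp_all
  moreover have "a - b \<le> max 1 M * (a - b)" "L a - L b \<le> max 1 M * (a - b)"
    using ab L_ab(2) mult_right_mono[of 1 "max 1 M" "a - b"] mult_right_mono[of M "max 1 M" "a - b"]
    by simp_all
  hence "(1 - t) * (a - b) + t * (L a - L b) \<le> (1 - t) * (max 1 M * (a - b)) + t * (max 1 M * (a - b))"
    using t by (intro add_mono mult_left_mono) simp_all
  ultimately show "min 1 m * (a - b) \<le> lift_interp L t a - lift_interp L t b"
    and "lift_interp L t a - lift_interp L t b \<le> max 1 M * (a - b)"
    unfolding incr by (simp_all add: algebra_simps)
qed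

lemma bi_lipschitz_lift_half_turn:
  assumes F: "bi_lipschitz_lift m M F" and "0 < m" and ab: "b \<le> a" "a \<le> b + pi"
  shows "cmod (cis (F a) - cis (F b)) \<le> 3 * M * cmod (cis a - cis b)"
    and "cmod (cis a - cis b) \<le> 3 / m * cmod (cis (F a) - cis (F b))"
proof -
  have per: "F (\<theta> + 2*pi) = F \<theta> + 2*pi"
    and bounds: "b' \<le> a' \<Longrightarrow> a' \<le> b' + pi \<Longrightarrow>
      m * (a' - b') \<le> F a' - F b' \<and> F a' - F b' \<le> M * (a' - b')"
    for \<theta> a' b' using F by (simp_all add: bi_lipschitz_lift_def)
  have lower: "b' \<le> a' \<Longrightarrow> a' \<le> b' + pi \<Longrightarrow> m * (a' - b') \<le> F a' - F b'" for a' b'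
    using bounds by blast
  define e D where "e = a - b" and "D = F a - F b"
  have e: "0 \<le> e" "e \<le> pi" "e \<le> 3 * cmod (cis a - cis b)"
    using ab norm_cis_diff_ge[of a b] by (simp_all add: e_def)
  have D: "m * e \<le> D" "D \<le> M * e" using bounds[OF ab] by (simp_all add: e_def D_def)
  have me: "0 \<le> m * e" using e \<open>0 < m\<close> by simp
  have "m * pi \<le> F (b + pi) - F b" "F (b + pi) - F b \<le> M * pi" using bounds[of b "b + pi"] by simp_all
  hence "m * pi \<le> M * pi" by linarith
  hence "0 \<le> M" using \<open>0 < m\<close> by simp
  have "cmod (cis (F a) - cis (F b)) \<le> \<bar>D\<bar>" using norm_cis_diff_le by (simp add: D_def)
  also have "\<bar>D\<bar> \<le> M * e" using D me by linarith
  also have "\<dots> \<le> 3 * M * cmod (cis a - cis b)"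
    using mult_left_mono[OF e(3) \<open>0 \<le> M\<close>] by (simp add: ac_simps)
  finally show "cmod (cis (F a) - cis (F b)) \<le> 3 * M * cmod (cis a - cis b)" .
  have "m * e \<le> m * (2*pi - e)" using e \<open>0 < m\<close> by (intro mult_left_mono) auto
  also have "\<dots> \<le> 2*pi - D"
    using lift_increment_gap[OF per lower ab] by (simp add: e_def D_def)
  finally have gap: "m * e \<le> 2*pi - D" .
  hence "0 \<le> D" "D \<le> 2*pi" using D me by simp_all
  have "m * e \<le> min D (2*pi - D)" using D gap by simp
  also have "\<dots> \<le> 3 * cmod (cis (F a) - cis (F b))"
    using norm_cis_diff_ge_min[of "F a" "F b"] \<open>0 \<le> D\<close> \<open>D \<le> 2*pi\<close> by (simp add: D_def)
  finally have "e \<le> 3 / m * cmod (cis (F a) - cis (F b))"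
    using \<open>0 < m\<close> by (simp add: field_simps)
  thus "cmod (cis a - cis b) \<le> 3 / m * cmod (cis (F a) - cis (F b))"
    using norm_cis_diff_le[of a b] e by (simp add: e_def)
qed

lemma bi_lipschitz_lift_circle:
  assumes F: "bi_lipschitz_lift m M F" and "0 < m" "3 * M \<le> K" "3 / m \<le> K"
    and ab: "\<bar>a - b\<bar> \<le> 2*pi"
  shows "cmod (cis (F a) - cis (F b)) \<le> K * cmod (cis a - cis b)
    \<and> cmod (cis a - cis b) \<le> K * cmod (cis (F a) - cis (F b))"
proof -
  let ?P = "\<lambda>a b. cmod (cis (F a) - cis (F b)) \<le> K * cmod (cis a - cis b)
    \<and> cmod (cis a - cis b) \<le> K * cmod (cis (F a) - cis (F b))"
  have half: "?P a b" if "b \<le> a" "a \<le> b + pi" for a b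
    using bi_lipschitz_lift_half_turn[OF F \<open>0 < m\<close> that] assms(3,4)
      mult_right_mono[of "3 * M" K "cmod (cis a - cis b)"]
      mult_right_mono[of "3 / m" K "cmod (cis (F a) - cis (F b))"]
    by auto
  have sym: "?P a b \<Longrightarrow> ?P b a" for a b by (simp add: norm_minus_commute)
  have turn: "?P a b" if "b \<le> a" "a \<le> b + 2*pi" for a b
  proof (cases "a \<le> b + pi")
    case False
    have "F (b + 2*pi) = F b + 2*pi" using F by (simp add: bi_lipschitz_lift_def)
    moreover have "cis (x + 2*pi) = cis x" for x by (simp flip: cis_mult)
    moreover have "?P (b + 2*pi) a" using False that by (intro half) auto
    ultimately have "?P b a" by simp
    thus ?thesis by (rule sym)
  qed (use half that in auto)
  show ?thesis
  proof (cases "b \<le> a")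
    case True thus ?thesis using turn ab by simp
  next
    case False thus ?thesis using turn[of a b] sym[of b a] ab by simp
  qed
qed

lemma norm_cis_lift_interp_diff_le:
  "cmod (cis (lift_interp L t a) - cis (lift_interp L s a)) \<le> \<bar>L a - a\<bar> * \<bar>t - s\<bar>"
proof -
  have "lift_interp L t a - lift_interp L s a = (L a - a) * (t - s)"
    by (simp add: lift_interp_def algebra_simps)
  thus ?thesis using norm_cis_diff_le[of "lift_interp L t a" "lift_interp L s a"] by (simp add: abs_mult)
qed

lemma bi_lipschitz_on_phibar:
  assumes L: "bi_lipschitz_lift m M L" "0 < m" and mono: "mono L"
  shows "bi_lipschitz_on (cball 0 1 \<times> {0..1}) (phibar L)"
proof -
  define K where "K = max (3 * max 1 M) (3 / min 1 m)"
  define B where "B = \<bar>L (-pi)\<bar> + \<bar>L pi\<bar> + pi"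
  have "0 \<le> B" by (simp add: B_def)
  let ?G = "\<lambda>t z. rcis (cmod z) (lift_interp L t (Arg z))"
  have "bi_lipschitz_on (cball 0 1 \<times> {0..1}) (\<lambda>(z, t). (?G t z, t))"
  proof (rule bi_lipschitz_on_fibrewise)
    show "1 \<le> K" by (simp add: K_def)
    show "0 \<le> B" by fact
  next
    fix t :: real and z w :: complex assume t: "t \<in> {0..1}"
    let ?a = "Arg z" and ?b = "Arg w" and ?\<phi> = "lift_interp L t"
    have "\<bar>?a - ?b\<bar> \<le> 2*pi" using Arg_bounded[of z] Arg_bounded[of w] by linarith
    hence angle: "cmod (cis (?\<phi> ?a) - cis (?\<phi> ?b)) \<le> K * cmod (cis ?a - cis ?b)
        \<and> cmod (cis ?a - cis ?b) \<le> K * cmod (cis (?\<phi> ?a) - cis (?\<phi> ?b))"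
      using t L(2)
      by (intro bi_lipschitz_lift_circle[OF bi_lipschitz_lift_interp[OF L(1)]]) (auto simp: K_def)
    have "1 \<le> K" by (simp add: K_def)
    have zw: "z - w = rcis (cmod z) ?a - rcis (cmod w) ?b" by (simp add: rcis_cmod_Arg)
    show "dist (?G t z) (?G t w) \<le> K * dist z w \<and> dist z w \<le> K * dist (?G t z) (?G t w)"
      unfolding dist_norm zw using angle \<open>1 \<le> K\<close>
        norm_rcis_diff_le[of "cmod z" "cmod w" K "?\<phi> ?a" "?\<phi> ?b" ?a ?b]
        norm_rcis_diff_le[of "cmod z" "cmod w" K ?a ?b "?\<phi> ?a" "?\<phi> ?b"]
      by simp
  next
    fix t s :: real and w :: complex assume "w \<in> cball 0 1"
    have "L (-pi) \<le> L (Arg w)" "L (Arg w) \<le> L pi"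
      using Arg_bounded[of w] by (auto intro: monoD[OF mono])
    hence "\<bar>L (Arg w) - Arg w\<bar> \<le> B" using Arg_bounded[of w] by (simp add: B_def abs_le_iff) linarith
    hence "cmod (cis (lift_interp L t (Arg w)) - cis (lift_interp L s (Arg w))) \<le> B * \<bar>t - s\<bar>"
      using norm_cis_lift_interp_diff_le[of L t "Arg w" s] mult_right_mono[of _ B "\<bar>t - s\<bar>"]
      by (meson abs_ge_zero order_trans)
    hence "cmod w * cmod (cis (lift_interp L t (Arg w)) - cis (lift_interp L s (Arg w)))
        \<le> 1 * (B * \<bar>t - s\<bar>)"
      using \<open>w \<in> cball 0 1\<close> \<open>0 \<le> B\<close> by (intro mult_mono) auto
    thus "dist (?G t w) (?G s w) \<le> B * dist t s"
      by (simp add: dist_norm rcis_def norm_mult flip: right_diff_distrib)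
  qed
  moreover have "(\<lambda>(z, t). (?G t z, t)) = phibar L" by (auto simp: fun_eq_iff phibar_def)
  ultimately show ?thesis by simp
qed

theorem lemma4p3:
  fixes \<phi> :: "complex \<Rightarrow> complex" and L :: "real \<Rightarrow> real"
  assumes homeo: "\<exists>\<psi>. homeomorphism (sphere 0 1) (sphere 0 1) \<phi> \<psi>"
    and bilip: "bi_lipschitz_on (sphere 0 1) \<phi>"
    and fix1: "\<phi> 1 = 1" and fixi: "\<phi> \<i> = \<i>"
    and fixm1: "\<phi> (-1) = -1" and fixmi: "\<phi> (-\<i>) = -\<i>"
    and lift: "\<forall>\<theta>. \<phi> (cis \<theta>) = cis (L \<theta>)"
    and lift_cont: "continuous_on UNIV L"
    and lift_mono: "strict_mono L"
    and lift0: "L 0 = 0"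
  shows "bi_lipschitz_on (cball 0 1 \<times> {0..1}) (phibar L)"
proof -
  obtain C where lip: "lipschitz_on C (sphere 0 1) \<phi>"
    and co_lip: "\<forall>x\<in>sphere 0 1. \<forall>y\<in>sphere 0 1. dist x y \<le> C * dist (\<phi> x) (\<phi> y)"
    using bilip unfolding bi_lipschitz_on_def by blast
  have "cmod (cis (L a) - cis (L b)) \<le> C * cmod (cis a - cis b)" for a b
    using lipschitz_onD[OF lip, of "cis a" "cis b"] lift by (simp add: dist_norm)
  moreover have "cmod (cis a - cis b) \<le> C * cmod (cis (L a) - cis (L b))" for a b
    using co_lip[rule_format, of "cis a" "cis b"] lift by (simp add: dist_norm)
  ultimately obtain m M where "0 < m" "bi_lipschitz_lift m M L"
    using bi_lipschitz_lift_of_circle_map[OF lift_cont lift_mono] by blast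
  thus ?thesis using bi_lipschitz_on_phibar strict_mono_mono[OF lift_mono] by blast
qed

end
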